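(* Let $(d_1,d_2)\in\mathbb N^2$ and $(p,q)\in\mathbb N^2\setminus\{(0,0)\}$. Then (1) $\mathrm{CG}^0_+(p,q)=\varnothing$ if $qd_1\le pd_2$; (2) $\mathrm{CG}^0_-(p,q)=\varnothing$ if $qd_1\ge pd_2$.
   Context: Dyck paths and gradings: for $d_1,d_2\ge0$, $\mathcal P=\mathcal P(d_1,d_2)$ is the highest lattice path of unit east (horizontal) and north (vertical) edges from $(0,0)$ to $(d_1,d_2)$ never passing strictly above the segment joining them; $\mathcal P_{\mathbf E},\mathcal P_{\mathbf N}$ its horizontal/vertical edge sets; for a set $C$ of edges $C_{\mathbf E},C_{\mathbf N}$, $|C|$ as usual; $\overrightarrow{ef}$ is the set of edges from $e$ to $f$ along the path inclusive, continuing cyclically from the last edge to the first if $f$ comes before $e$. A grading is a map $\omega$ from edges to $\mathbb N$, $\omega(C)=\sum_{e\in C}\omega(e)$; it is compatible if for all $u\in\mathcal P_{\mathbf E},v\in\mathcal P_{\mathbf N}$ with $\omega(u)\omega(v)>0$ some $e\in\overrightarrow{uv}$ satisfies either $e\in\mathcal P_{\mathbf N}\setminus\{v\}$ and $|(\overrightarrow{ue})_{\mathbf N}|=\omega((\overrightarrow{ue})_{\mathbf E})$, or $e\in\mathcal P_{\mathbf E}\setminus\{u\}$ and $|(\overrightarrow{ev})_{\mathbf E}|=\omega((\overrightarrow{ev})_{\mathbf N})$. Shadows: $\operatorname{sh}(e)=\emptyset$ if $\omega(e)=0$; for horizontal $e$, $\operatorname{sh}(e)=(\overrightarrow{ev})_{\mathbf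 N}$ where $v$ is vertical with $|(\overrightarrow{ev})_{\mathbf N}|=\omega((\overrightarrow{ev})_{\mathbf E})$ and $\overrightarrow{ev}$ shortest, or $\mathcal P_{\mathbf N}$ if no such $v$; for vertical $e$, $\operatorname{sh}(e)=(\overrightarrow{ue})_{\mathbf E}$ where $u$ is horizontal with $|(\overrightarrow{ue})_{\mathbf E}|=\omega((\overrightarrow{ue})_{\mathbf N})$ and $\overrightarrow{ue}$ shortest, or $\mathcal P_{\mathbf E}$ if none; $\operatorname{sh}(C)=\bigcup_{e\in C}\operatorname{sh}(e)$. Let $\mathrm{CG}^0_+(p,q)$ be the set of compatible gradings $\omega$ on $\mathcal P(d_1,d_2)$ with $\omega(\mathcal P_{\mathbf N})=p$, $\omega(\mathcal P_{\mathbf E})=q$ and $\omega(\mathcal P_{\mathbf N}\setminus\operatorname{sh}(\mathcal P_{\mathbf E}))=0$, and $\mathrm{CG}^0_-(p,q)$ the set of those with $\omega(\mathcal P_{\mathbf N})=p$, $\omega(\mathcal P_{\mathbf E})=q$ and $\omega(\mathcal P_{\mathbf E}\setminus\operatorname{sh}(\mathcal P_{\mathbf N}))=0$. *)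

theory Defs
  imports Main
begin

text \<open>The highest lattice path P(d1,d2) from (0,0) to (d1,d2) weakly below the segment,
  built greedily: edges are indexed 0..<d1+d2 in path order; from the current point (x,y)
  the path goes north whenever the new point stays weakly below the segment
  (i.e. (y+1)*d1 \<le> x*d2) and y < d2, otherwise east.\<close>

fun dpos :: "nat \<Rightarrow> nat \<Rightarrow> nat \<Rightarrow> nat \<times> nat" where
  "dpos d1 d2 0 = (0, 0)"
| "dpos d1 d2 (Suc i) =
     (let (x, y) = dpos d1 d2 i in
      if y < d2 \<and> (y + 1) * d1 \<le> x * d2 then (x, y + 1) else (x + 1, y))"

definition isN :: "nat \<Rightarrow> nat \<Rightarrow> nat \<Rightarrow> bool" where
  "isN d1 d2 i = (let (x, y) = dpos d1 d2 i in y < d2 \<and> (y + 1) * d1 \<le> x * d2)"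

definition edgesN :: "nat \<Rightarrow> nat \<Rightarrow> nat set" where
  "edgesN d1 d2 = {i. i < d1 + d2 \<and> isN d1 d2 i}"

definition edgesE :: "nat \<Rightarrow> nat \<Rightarrow> nat set" where
  "edgesE d1 d2 = {i. i < d1 + d2 \<and> \<not> isN d1 d2 i}"

definition arc :: "nat \<Rightarrow> nat \<Rightarrow> nat \<Rightarrow> nat \<Rightarrow> nat set" where
  "arc d1 d2 e f = (if e \<le> f then {e..f} else {e..<d1 + d2} \<union> {0..f})"

definition grading :: "nat \<Rightarrow> nat \<Rightarrow> (nat \<Rightarrow> nat) \<Rightarrow> bool" where
  "grading d1 d2 w = (\<forall>i. d1 + d2 \<le> i \<longrightarrow> w i = 0)"

definition compatible :: "nat \<Rightarrow> nat \<Rightarrow> (nat \<Rightarrow> nat) \<Rightarrow> bool" where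
  "compatible d1 d2 w = (\<forall>u \<in> edgesE d1 d2. \<forall>v \<in> edgesN d1 d2. w u * w v > 0 \<longrightarrow>
     (\<exists>e \<in> arc d1 d2 u v.
        (e \<in> edgesN d1 d2 - {v} \<and>
           card (arc d1 d2 u e \<inter> edgesN d1 d2) = sum w (arc d1 d2 u e \<inter> edgesE d1 d2))
      \<or> (e \<in> edgesE d1 d2 - {u} \<and>
           card (arc d1 d2 e v \<inter> edgesE d1 d2) = sum w (arc d1 d2 e v \<inter> edgesN d1 d2))))"

definition shadow :: "nat \<Rightarrow> nat \<Rightarrow> (nat \<Rightarrow> nat) \<Rightarrow> nat \<Rightarrow> nat set" where
  "shadow d1 d2 w e =
    (if w e = 0 then {}
     else if e \<in> edgesE d1 d2 then
       (let P = (\<lambda>v. v \<in> edgesN d1 d2 \<and>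
                   card (arc d1 d2 e v \<inter> edgesN d1 d2) = sum w (arc d1 d2 e v \<inter> edgesE d1 d2))
        in if \<exists>v. P v
           then arc d1 d2 e (arg_min (\<lambda>v. card (arc d1 d2 e v)) P) \<inter> edgesN d1 d2
           else edgesN d1 d2)
     else
       (let P = (\<lambda>u. u \<in> edgesE d1 d2 \<and>
                   card (arc d1 d2 u e \<inter> edgesE d1 d2) = sum w (arc d1 d2 u e \<inter> edgesN d1 d2))
        in if \<exists>u. P u
           then arc d1 d2 (arg_min (\<lambda>u. card (arc d1 d2 u e)) P) e \<inter> edgesE d1 d2
           else edgesE d1 d2))"

definition shadowSet :: "nat \<Rightarrow> nat \<Rightarrow> (nat \<Rightarrow> nat) \<Rightarrow> nat set \<Rightarrow> nat set" where
  "shadowSet d1 d2 w C = (\<Union>e \<in> C. shadow d1 d2 w e)"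

definition CG0plus :: "nat \<Rightarrow> nat \<Rightarrow> nat \<Rightarrow> nat \<Rightarrow> (nat \<Rightarrow> nat) set" where
  "CG0plus d1 d2 p q = {w. grading d1 d2 w \<and> compatible d1 d2 w \<and>
     sum w (edgesN d1 d2) = p \<and> sum w (edgesE d1 d2) = q \<and>
     sum w (edgesN d1 d2 - shadowSet d1 d2 w (edgesE d1 d2)) = 0}"

definition CG0minus :: "nat \<Rightarrow> nat \<Rightarrow> nat \<Rightarrow> nat \<Rightarrow> (nat \<Rightarrow> nat) set" where
  "CG0minus d1 d2 p q = {w. grading d1 d2 w \<and> compatible d1 d2 w \<and>
     sum w (edgesN d1 d2) = p \<and> sum w (edgesE d1 d2) = q \<and>
     sum w (edgesE d1 d2 - shadowSet d1 d2 w (edgesN d1 d2)) = 0}"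

end

(* Read the lattice path as a cyclic word of north and east edges and give each edge the drift
   -1 (north) or its weight (east). Call an edge charged if some window of drifts ending just
   before it has positive sum. The shadow and compatibility conditions force every north edge of
   positive weight to close a balanced arc of charged edges that starts at an east edge; taking the
   first maximum of the partial sums of a suitable potential then shows that the weight of the north
   edges is at most the number of charged east edges. Dually, a Lindley-type recursion for the window
   maxima shows that the number of charged north edges is at most the weight of the east edges.
   Charge can only be lost at north edges and gained at east edges, so summation by parts against
   the height y d1 - x d2 of the path, which stays in the interval (-(d1 + d2), 0], gives
   d2 * #(charged east) < d1 * #(charged north). Together, p d2 < q d1 for every grading in
   CG0plus(p, q). Reversing the path exchanges north and east edges and turns CG0minus(p, q) into
   the same situation, giving q d1 < p d2 there. *)

theory Submission
  imports Defs
begin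

section \<open>Arcs of a cycle\<close>

definition cdist :: "nat \<Rightarrow> nat \<Rightarrow> nat \<Rightarrow> nat" where
  "cdist n s f = (if s \<le> f then f - s else f + n - s)"

definition cyc_arc :: "nat \<Rightarrow> nat \<Rightarrow> nat \<Rightarrow> nat set" where
  "cyc_arc n s f = (if s \<le> f then {s..f} else {s..<n} \<union> {0..f})"

lemma arc_eq_cyc_arc: "arc d1 d2 = cyc_arc (d1 + d2)"
  by (intro ext) (simp add: arc_def cyc_arc_def)

lemma cdist_less: "s < n \<Longrightarrow> f < n \<Longrightarrow> cdist n s f < n"
  by (auto simp: cdist_def)

lemma cdist_self [simp]: "cdist n s s = 0"
  by (simp add: cdist_def)

lemma add_cdist_mod: "s < n \<Longrightarrow> f < n \<Longrightarrow> (s + cdist n s f) mod n = f"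
  by (auto simp: cdist_def le_mod_geq)

lemma cdist_add_mod: "s < n \<Longrightarrow> i < n \<Longrightarrow> cdist n s ((s + i) mod n) = i"
  by (cases "s + i < n") (auto simp: cdist_def le_mod_geq)

lemma cdist_eq_iff: "s < n \<Longrightarrow> x < n \<Longrightarrow> y < n \<Longrightarrow> cdist n s x = cdist n s y \<longleftrightarrow> x = y"
  by (auto simp: cdist_def split: if_splits)

lemma cdist_eq_iff_end: "f < n \<Longrightarrow> x < n \<Longrightarrow> y < n \<Longrightarrow> cdist n x f = cdist n y f \<longleftrightarrow> x = y"
  by (auto simp: cdist_def split: if_splits)

lemma mem_cyc_arc_iff: "s < n \<Longrightarrow> f < n \<Longrightarrow> x \<in> cyc_arc n s f \<longleftrightarrow> x < n \<and> cdist n s x \<le> cdist n s f"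
  by (auto simp: cyc_arc_def cdist_def)

lemma mem_cyc_arc_iff_end: "s < n \<Longrightarrow> f < n \<Longrightarrow> x \<in> cyc_arc n s f \<longleftrightarrow> x < n \<and> cdist n x f \<le> cdist n s f"
  by (auto simp: cyc_arc_def cdist_def)

lemma cyc_arc_subset: "f < n \<Longrightarrow> cyc_arc n s f \<subseteq> {..<n}"
  by (auto simp: cyc_arc_def)

lemma cyc_arc_self [simp]: "cyc_arc n s s = {s}"
  by (simp add: cyc_arc_def)

lemma cyc_arc_subarc: "s < n \<Longrightarrow> f < n \<Longrightarrow> e \<in> cyc_arc n s f \<Longrightarrow> e \<noteq> s \<Longrightarrow> cyc_arc n e f \<subseteq> cyc_arc n s f - {s}"
  by (auto simp: cyc_arc_def split: if_splits)

lemma cyc_arc_eq_image: "s < n \<Longrightarrow> f < n \<Longrightarrow> cyc_arc n s f = (\<lambda>i. (s + i) mod n) ` {..cdist n s f}"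
proof (intro set_eqI iffI)
  fix x assume "s < n" "f < n" "x \<in> cyc_arc n s f"
  then show "x \<in> (\<lambda>i. (s + i) mod n) ` {..cdist n s f}"
    using add_cdist_mod[of s n x] by (force simp: mem_cyc_arc_iff)
next
  fix x assume "s < n" "f < n" "x \<in> (\<lambda>i. (s + i) mod n) ` {..cdist n s f}"
  then show "x \<in> cyc_arc n s f"
    using cdist_less[of s n f] by (auto simp: mem_cyc_arc_iff cdist_add_mod)
qed

lemma inj_on_add_mod: "inj_on (\<lambda>i. (s + i) mod n) {..<n::nat}"
proof (rule inj_onI)
  fix i j assume "i \<in> {..<n}" "j \<in> {..<n}" "(s + i) mod n = (s + j) mod n"
  moreover have "i mod n = j mod n"
    using \<open>(s + i) mod n = (s + j) mod n\<close> by (simp add: nat_mod_eq_iff)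
  ultimately show "i = j" by simp
qed

lemma sum_cyc_arc: "s < n \<Longrightarrow> f < n \<Longrightarrow> sum g (cyc_arc n s f) = (\<Sum>i\<le>cdist n s f. g ((s + i) mod n))"
proof -
  assume "s < n" "f < n"
  have "inj_on (\<lambda>i. (s + i) mod n) {..cdist n s f}"
    by (rule inj_on_subset[OF inj_on_add_mod]) (use cdist_less[OF \<open>s < n\<close> \<open>f < n\<close>] in auto)
  with \<open>s < n\<close> \<open>f < n\<close> show ?thesis
    by (simp add: cyc_arc_eq_image sum.reindex)
qed

lemma card_cyc_arc: "s < n \<Longrightarrow> f < n \<Longrightarrow> card (cyc_arc n s f) = Suc (cdist n s f)"
  using sum_cyc_arc[of s n f "\<lambda>_. 1::nat"] by simp

text \<open>With \<open>P\<close> marking the north edges this is the balance condition on the arc from \<open>s\<close>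
  to \<open>f\<close> used in the compatibility and shadow conditions; with \<open>\<lambda>i. \<not> P i\<close> it is the dual
  condition counting east edges against north weight.\<close>

definition arc_balanced :: "nat \<Rightarrow> (nat \<Rightarrow> bool) \<Rightarrow> (nat \<Rightarrow> nat) \<Rightarrow> nat \<Rightarrow> nat \<Rightarrow> bool" where
  "arc_balanced n P w s f \<longleftrightarrow> card (cyc_arc n s f \<inter> {i. P i}) = sum w (cyc_arc n s f \<inter> {i. \<not> P i})"

definition arc_compatible :: "nat \<Rightarrow> (nat \<Rightarrow> bool) \<Rightarrow> (nat \<Rightarrow> nat) \<Rightarrow> bool" where
  "arc_compatible n P w \<longleftrightarrow> (\<forall>u<n. \<forall>v<n. \<not> P u \<longrightarrow> P v \<longrightarrow> 0 < w u \<longrightarrow> 0 < w v \<longrightarrow>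
     (\<exists>e \<in> cyc_arc n u v. (P e \<and> e \<noteq> v \<and> arc_balanced n P w u e)
        \<or> (\<not> P e \<and> e \<noteq> u \<and> arc_balanced n (\<lambda>i. \<not> P i) w e v)))"

section \<open>Reversing the cycle\<close>

definition mirror :: "nat \<Rightarrow> nat \<Rightarrow> nat" where
  "mirror n x = n - Suc x"

lemma mirror_less: "x < n \<Longrightarrow> mirror n x < n"
  by (simp add: mirror_def)

lemma mirror_mirror [simp]: "x < n \<Longrightarrow> mirror n (mirror n x) = x"
  by (simp add: mirror_def)

lemma inj_on_mirror: "inj_on (mirror n) {..<n}"
  by (rule inj_onI) (simp add: mirror_def)

lemma mem_mirror_image: "A \<subseteq> {..<n} \<Longrightarrow> y \<in> mirror n ` A \<longleftrightarrow> y < n \<and> mirror n y \<in> A"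
  by (force simp: mirror_less)

lemma mirror_image_Int: "A \<subseteq> {..<n} \<Longrightarrow> mirror n ` A \<inter> {i. P (mirror n i)} = mirror n ` (A \<inter> {i. P i})"
  by (auto simp: subset_iff)

lemma card_mirror_image: "A \<subseteq> {..<n} \<Longrightarrow> card (mirror n ` A) = card A"
  by (meson card_image inj_on_mirror inj_on_subset)

lemma sum_mirror_image:
  assumes "A \<subseteq> {..<n}"
  shows "sum (\<lambda>i. w (mirror n i)) (mirror n ` A) = sum w A"
proof -
  have "sum (\<lambda>i. w (mirror n i)) (mirror n ` A) = sum (\<lambda>i. w (mirror n (mirror n i))) A"
    using inj_on_subset[OF inj_on_mirror assms] by (simp add: sum.reindex)
  also have "\<dots> = sum w A"
    using assms by (intro sum.cong) auto
  finally show ?thesis .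
qed

lemma mirror_image_Collect: "{i. i < n \<and> P (mirror n i)} = mirror n ` {i. i < n \<and> P i}"
proof (rule set_eqI)
  fix y show "y \<in> {i. i < n \<and> P (mirror n i)} \<longleftrightarrow> y \<in> mirror n ` {i. i < n \<and> P i}"
    by (subst mem_mirror_image) (auto simp: mirror_less)
qed

lemma cyc_arc_mirror:
  assumes "s < n" "f < n"
  shows "cyc_arc n (mirror n f) (mirror n s) = mirror n ` cyc_arc n s f"
proof (rule set_eqI)
  fix y show "y \<in> cyc_arc n (mirror n f) (mirror n s) \<longleftrightarrow> y \<in> mirror n ` cyc_arc n s f"
    using assms by (subst mem_mirror_image) (auto simp: cyc_arc_def mirror_def)
qed

lemma mem_cyc_arc_mirror:
  "s < n \<Longrightarrow> f < n \<Longrightarrow> x \<in> cyc_arc n (mirror n f) (mirror n s) \<longleftrightarrow> x < n \<and> mirror n x \<in> cyc_arc n s f"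
  by (simp add: cyc_arc_mirror mem_mirror_image cyc_arc_subset)

lemma arc_balanced_mirror:
  assumes "s < n" "f < n"
  shows "arc_balanced n (\<lambda>i. P (mirror n i)) (\<lambda>i. w (mirror n i)) (mirror n f) (mirror n s)
    \<longleftrightarrow> arc_balanced n P w s f"
proof -
  have arc: "cyc_arc n s f \<subseteq> {..<n}"
    by (rule cyc_arc_subset[OF \<open>f < n\<close>])
  show ?thesis
    unfolding arc_balanced_def cyc_arc_mirror[OF assms] mirror_image_Int[OF arc]
      mirror_image_Int[OF arc, of "\<lambda>i. \<not> P i"]
    using arc by (simp add: card_mirror_image sum_mirror_image le_infI1)
qed

lemma arc_compatible_mirror:
  assumes "arc_compatible n P w"
  shows "arc_compatible n (\<lambda>i. \<not> P (mirror n i)) (\<lambda>i. w (mirror n i))"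
  unfolding arc_compatible_def
proof (intro allI impI)
  fix u' v' assume "u' < n" "v' < n" and "\<not> \<not> P (mirror n u')" "\<not> P (mirror n v')"
    and "0 < w (mirror n u')" "0 < w (mirror n v')"
  define u v where "u = mirror n v'" and "v = mirror n u'"
  have uv: "u < n" "v < n" "u' = mirror n v" "v' = mirror n u"
    using \<open>u' < n\<close> \<open>v' < n\<close> by (simp_all add: u_def v_def mirror_less)
  obtain e where e: "e \<in> cyc_arc n u v"
    and alt: "(P e \<and> e \<noteq> v \<and> arc_balanced n P w u e) \<or> (\<not> P e \<and> e \<noteq> u \<and> arc_balanced n (\<lambda>i. \<not> P i) w e v)"
    using assms uv \<open>\<not> \<not> P (mirror n u')\<close> \<open>\<not> P (mirror n v')\<close> \<open>0 < w (mirror n u')\<close> \<open>0 < w (mirror n v')\<close>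
    unfolding arc_compatible_def u_def v_def by (metis mirror_less)
  have "e < n" using e cyc_arc_subset[OF uv(2)] by blast
  have mirror_inj: "mirror n x = mirror n y \<longleftrightarrow> x = y" if "x < n" "y < n" for x y
    using that by (metis mirror_mirror)
  show "\<exists>e' \<in> cyc_arc n u' v'.
          ((\<not> P (mirror n e')) \<and> e' \<noteq> v' \<and> arc_balanced n (\<lambda>i. \<not> P (mirror n i)) (\<lambda>i. w (mirror n i)) u' e')
        \<or> (\<not> \<not> P (mirror n e') \<and> e' \<noteq> u' \<and>
             arc_balanced n (\<lambda>i. \<not> \<not> P (mirror n i)) (\<lambda>i. w (mirror n i)) e' v')"
  proof (intro bexI)
    show "mirror n e \<in> cyc_arc n u' v'"
      using e uv by (simp add: cyc_arc_mirror)
    show "((\<not> P (mirror n (mirror n e))) \<and> mirror n e \<noteq> v'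
            \<and> arc_balanced n (\<lambda>i. \<not> P (mirror n i)) (\<lambda>i. w (mirror n i)) u' (mirror n e))
        \<or> (\<not> \<not> P (mirror n (mirror n e)) \<and> mirror n e \<noteq> u' \<and>
             arc_balanced n (\<lambda>i. \<not> \<not> P (mirror n i)) (\<lambda>i. w (mirror n i)) (mirror n e) v')"
      using alt uv \<open>e < n\<close> mirror_inj
        arc_balanced_mirror[of u n e P w] arc_balanced_mirror[of e n v "\<lambda>i. \<not> P i" w]
      by auto
  qed
qed

section \<open>Periodic sequences and window sums\<close>

lemma periodic_eq_mod:
  fixes g :: "nat \<Rightarrow> 'a" and n m :: nat
  assumes "\<And>m. g (m + n) = g m"
  shows "g m = g (m mod n)"
proof (induction m rule: less_induct)
  case (less m)
  show ?case
  proof (cases "m < n")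
    case False
    then have "g m = g (m - n)" using assms[of "m - n"] by simp
    also have "\<dots> = g ((m - n) mod n)"
      using False less.IH[of "m - n"] by (cases n) auto
    finally show ?thesis using False by (simp add: le_mod_geq)
  qed simp
qed

lemma exists_switch_off:
  fixes c :: "nat \<Rightarrow> bool"
  assumes n: "0 < n" and per: "\<And>m. c (m + n) = c m" and "c i" "\<not> c j"
  shows "\<exists>m<n. c m \<and> \<not> c (Suc m)"
proof (rule ccontr)
  assume "\<not> ?thesis"
  then have no_switch: "c (Suc m)" if "m < n" "c m" for m
    using that by blast
  have mod: "c m = c (m mod n)" for m
    using periodic_eq_mod[of c, OF per] .
  have step: "c (Suc m)" if "c m" for m
  proof -
    have "c (Suc (m mod n))"
      using no_switch[of "m mod n"] that n mod[of m] by simp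
    then show ?thesis
      using mod[of "Suc m"] mod[of "Suc (m mod n)"] by (simp add: mod_Suc_eq)
  qed
  have "c (i + k)" for k
    by (induction k) (use \<open>c i\<close> step in auto)
  moreover have "i + (j + i * n - i) = j + i * n"
    using n by (simp add: trans_le_add2)
  ultimately have "c (j + i * n)"
    by metis
  moreover have "c (j + i * n) = c j"
    using mod[of "j + i * n"] mod[of j] by simp
  ultimately show False using \<open>\<not> c j\<close> by simp
qed

definition cyc_psum :: "nat \<Rightarrow> (nat \<Rightarrow> int) \<Rightarrow> nat \<Rightarrow> int" where
  "cyc_psum n f m = (\<Sum>j<m. f (j mod n))"

lemma cyc_psum_Suc: "cyc_psum n f (Suc m) = cyc_psum n f m + f (m mod n)"
  by (simp add: cyc_psum_def)

lemma cyc_psum_add: "cyc_psum n f (m + k) = cyc_psum n f m + (\<Sum>i<k. f ((m + i) mod n))"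
  by (induction k) (simp_all add: cyc_psum_def)

lemma cyc_psum_period: "cyc_psum n f (m + n) = cyc_psum n f m + sum f {..<n}"
  by (induction m) (simp_all add: cyc_psum_def)

lemma sum_cyc_arc_psum:
  assumes "s < n" "v < n" "n \<le> M" "(M - 1) mod n = v"
  shows "sum f (cyc_arc n s v) = cyc_psum n f M - cyc_psum n f (M - Suc (cdist n s v))"
proof -
  let ?d = "cdist n s v"
  have d: "?d < n" using cdist_less assms by blast
  have "(M - Suc ?d + ?d) mod n = (s + ?d) mod n"
    using d assms add_cdist_mod[of s n v] by simp
  then have "(M - Suc ?d) mod n = s mod n"
    by (simp add: nat_mod_eq_iff)
  then have start: "(M - Suc ?d) mod n = s"
    using \<open>s < n\<close> by simp
  have "cyc_psum n f M = cyc_psum n f (M - Suc ?d + Suc ?d)"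
    using d assms by simp
  also have "\<dots> = cyc_psum n f (M - Suc ?d) + (\<Sum>i\<le>?d. f ((s + i) mod n))"
    unfolding cyc_psum_add[of n f "M - Suc ?d" "Suc ?d"] lessThan_Suc_atMost
    using start by (simp add: mod_add_left_eq[of "M - Suc ?d", symmetric])
  finally show ?thesis
    using sum_cyc_arc[OF assms(1,2)] by simp
qed

lemma exists_positive_arcs_end:
  fixes f :: "nat \<Rightarrow> int"
  assumes n: "0 < n" and total: "0 < sum f {..<n}"
  obtains v where "v < n" "\<And>s. s < n \<Longrightarrow> 0 < sum f (cyc_arc n s v)"
proof -
  let ?S = "{n..<2 * n}"
  define mx where "mx = Max (cyc_psum n f ` ?S)"
  have le_mx: "cyc_psum n f m \<le> mx" if "m \<in> ?S" for m
    unfolding mx_def using that by simp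
  have "mx \<in> cyc_psum n f ` ?S"
    unfolding mx_def using n by (intro Max_in) auto
  then have ex: "\<exists>m. m \<in> ?S \<and> cyc_psum n f m = mx" by auto
  \<comment> \<open>Every window ending just before the first maximum of the partial sums has positive sum.\<close>
  define M where "M = (LEAST m. m \<in> ?S \<and> cyc_psum n f m = mx)"
  have M: "M \<in> ?S" "cyc_psum n f M = mx"
    using LeastI_ex[OF ex] unfolding M_def by auto
  have M_least: "M \<le> m" if "m \<in> ?S" "cyc_psum n f m = mx" for m
    unfolding M_def using that by (intro Least_le) simp
  have rises_to_M: "cyc_psum n f (M - k) < cyc_psum n f M" if "1 \<le> k" "k \<le> n" for k
  proof (cases "n \<le> M - k")
    case True
    then have "M - k \<in> ?S" "M - k < M" using M that by auto
    then show ?thesis using le_mx M M_least by force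
  next
    case False
    then have "M - k + n \<in> ?S" using M that by auto
    then show ?thesis using le_mx[of "M - k + n"] cyc_psum_period[of n f "M - k"] total M by simp
  qed
  show ?thesis
  proof
    show "(M - 1) mod n < n" using n by simp
    fix s assume "s < n"
    then have "Suc (cdist n s ((M - 1) mod n)) \<le> n"
      using cdist_less n by (simp add: Suc_le_eq)
    then show "0 < sum f (cyc_arc n s ((M - 1) mod n))"
      using \<open>s < n\<close> n M rises_to_M by (subst sum_cyc_arc_psum[where M = M]) auto
  qed
qed

text \<open>The largest sum of at most \<open>n - 1\<close> consecutive entries \<open>f (j mod n)\<close> ending just
  before position \<open>m\<close> (the empty window included); the shift by \<open>n\<close> avoids truncated
  subtraction.\<close>

definition max_suffix_sum :: "nat \<Rightarrow> (nat \<Rightarrow> int) \<Rightarrow> nat \<Rightarrow> int" where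
  "max_suffix_sum n f m = Max ((\<lambda>k. cyc_psum n f (m + n) - cyc_psum n f (m + n - k)) ` {..<n})"

lemma max_suffix_sum_ge: "k < n \<Longrightarrow> cyc_psum n f (m + n) - cyc_psum n f (m + n - k) \<le> max_suffix_sum n f m"
  unfolding max_suffix_sum_def by (rule Max_ge) auto

lemma max_suffix_sum_attained:
  assumes "0 < n"
  shows "\<exists>k<n. max_suffix_sum n f m = cyc_psum n f (m + n) - cyc_psum n f (m + n - k)"
proof -
  have "max_suffix_sum n f m \<in> (\<lambda>k. cyc_psum n f (m + n) - cyc_psum n f (m + n - k)) ` {..<n}"
    unfolding max_suffix_sum_def using assms by (intro Max_in) auto
  then show ?thesis by auto
qed

lemma max_suffix_sum_nonneg: "0 < n \<Longrightarrow> 0 \<le> max_suffix_sum n f m"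
  using max_suffix_sum_ge[of 0 n f m] by simp

lemma sum_le_max_suffix_sum: "k < n \<Longrightarrow> (\<Sum>i<k. f ((s + i) mod n)) \<le> max_suffix_sum n f (s + k)"
proof -
  assume "k < n"
  have "(s + n + i) mod n = (s + i) mod n" for i
    by (metis add.commute add.left_commute mod_add_self2)
  then have "(\<Sum>i<k. f ((s + i) mod n)) = (\<Sum>i<k. f ((s + n + i) mod n))"
    by simp
  also have "\<dots> = cyc_psum n f (s + k + n) - cyc_psum n f (s + k + n - k)"
    using cyc_psum_add[of n f "s + n" k] by (simp add: add.commute add.left_commute)
  also have "\<dots> \<le> max_suffix_sum n f (s + k)"
    using max_suffix_sum_ge[OF \<open>k < n\<close>] .
  finally show ?thesis .
qed

lemma max_suffix_sum_period: "max_suffix_sum n f (m + n) = max_suffix_sum n f m"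
proof -
  have "cyc_psum n f (m + n + n) - cyc_psum n f (m + n + n - k) = cyc_psum n f (m + n) - cyc_psum n f (m + n - k)"
    if "k < n" for k
    using that cyc_psum_period[of n f "m + n"] cyc_psum_period[of n f "m + n - k"]
    by (simp add: Nat.add_diff_assoc2)
  then show ?thesis
    unfolding max_suffix_sum_def by (intro arg_cong[where f = Max] image_cong) auto
qed

lemma max_suffix_sum_Suc_le:
  assumes "0 < n"
  shows "max_suffix_sum n f (Suc m) \<le> max 0 (max_suffix_sum n f m + f (m mod n))"
proof -
  obtain k where k: "k < n"
    "max_suffix_sum n f (Suc m) = cyc_psum n f (Suc m + n) - cyc_psum n f (Suc m + n - k)"
    using max_suffix_sum_attained[OF assms] by blast
  show ?thesis
  proof (cases k)
    case (Suc k')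
    then have "cyc_psum n f (m + n) - cyc_psum n f (m + n - k') \<le> max_suffix_sum n f m"
      using max_suffix_sum_ge k by simp
    then show ?thesis
      using k Suc cyc_psum_Suc[of n f "m + n"] by simp
  qed (use k in simp)
qed

lemma max_suffix_sum_Suc_pos:
  assumes n: "0 < n" and total: "sum f {..<n} \<le> 0"
    and pos: "0 < max_suffix_sum n f m" and "0 \<le> f (m mod n)"
  shows "0 < max_suffix_sum n f (Suc m)"
proof -
  obtain k where k: "k < n"
    "max_suffix_sum n f m = cyc_psum n f (m + n) - cyc_psum n f (m + n - k)"
    using max_suffix_sum_attained[OF n] by blast
  have step: "cyc_psum n f (Suc m + n) = cyc_psum n f (m + n) + f (m mod n)"
    using cyc_psum_Suc[of n f "m + n"] by simp
  show ?thesis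
  proof (cases "Suc k < n")
    case True
    then show ?thesis
      using max_suffix_sum_ge[OF True, of f "Suc m"] step k pos \<open>0 \<le> f (m mod n)\<close> by simp
  next
    case False
    then have "m + n - k = Suc m" using k by simp
    then show ?thesis
      using k pos step cyc_psum_period[of n f "Suc m"] total \<open>0 \<le> f (m mod n)\<close> by simp
  qed
qed

lemma max_suffix_sum_vanishes:
  assumes n: "0 < n" and total: "sum f {..<n} \<le> 0"
  shows "\<exists>m. max_suffix_sum n f m \<le> 0"
proof -
  let ?S = "{n..<2 * n}"
  have "Min (cyc_psum n f ` ?S) \<in> cyc_psum n f ` ?S"
    using n by (intro Min_in) auto
  then obtain M where M: "M \<in> ?S" "cyc_psum n f M = Min (cyc_psum n f ` ?S)"
    by (metis imageE)
  have le_psum: "cyc_psum n f M \<le> cyc_psum n f m" if "m \<in> ?S" for m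
    unfolding M(2) using that by (intro Min_le) auto
  have "cyc_psum n f M \<le> cyc_psum n f (M - k)" if "k < n" for k
  proof (cases "n \<le> M - k")
    case True
    then show ?thesis using M(1) that by (intro le_psum) auto
  next
    case False
    then have "M - k + n \<in> ?S" using M(1) that by auto
    then have "cyc_psum n f M \<le> cyc_psum n f (M - k + n)"
      by (rule le_psum)
    then show ?thesis using cyc_psum_period[of n f "M - k"] total by simp
  qed
  moreover obtain k where "k < n"
    "max_suffix_sum n f (M - n) = cyc_psum n f (M - n + n) - cyc_psum n f (M - n + n - k)"
    using max_suffix_sum_attained[OF n] by blast
  moreover have "M - n + n = M" using M(1) by simp
  ultimately have "max_suffix_sum n f (M - n) \<le> 0"
    by simp
  then show ?thesis ..
qed

lemma sum_max_suffix_sum_le: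
  assumes "0 < n"
  shows "(\<Sum>m<n. max_suffix_sum n f m) \<le> (\<Sum>m<n. max 0 (max_suffix_sum n f m + f m))"
proof -
  have "(\<Sum>m<n. max_suffix_sum n f (Suc m)) = (\<Sum>m<n. max_suffix_sum n f m)"
    using sum_lessThan_telescope[of "max_suffix_sum n f" n] max_suffix_sum_period[of n f 0]
    by (simp add: sum_subtractf)
  moreover have "(\<Sum>m<n. max_suffix_sum n f (Suc m)) \<le> (\<Sum>m<n. max 0 (max_suffix_sum n f m + f m))"
    using max_suffix_sum_Suc_le[OF assms, of f] by (intro sum_mono) (metis lessThan_iff mod_less)
  ultimately show ?thesis by simp
qed

lemma sum_of_bool_increments_telescope:
  fixes c :: "nat \<Rightarrow> bool" and h :: "nat \<Rightarrow> int"
  assumes "c n = c 0" "h n = h 0"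
  shows "(\<Sum>m<n. of_bool (c m) * (h (Suc m) - h m))
       = (\<Sum>m<n. (of_bool (c m) - of_bool (c (Suc m))) * (h (Suc m) + b))"
proof -
  have "(\<Sum>m<n. of_bool (c m) * (h (Suc m) - h m))
      = (\<Sum>m<n. (of_bool (c m) - of_bool (c (Suc m))) * (h (Suc m) + b)
           + (of_bool (c (Suc m)) * (h (Suc m) + b) - of_bool (c m) * (h m + b)))"
    by (intro sum.cong) (simp_all add: algebra_simps)
  also have "\<dots> = (\<Sum>m<n. (of_bool (c m) - of_bool (c (Suc m))) * (h (Suc m) + b))"
    using sum_lessThan_telescope[of "\<lambda>m. of_bool (c m) * (h m + b)" n] assms
    by (simp add: sum.distrib)
  finally show ?thesis .
qed

section \<open>Charged edges of a cyclic grading\<close>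

text \<open>\<open>north_shadowed\<close> is what the vanishing of the weight outside the shadows of the east
  edges provides: a north edge of positive weight lies in the shadow of an east edge \<open>u\<close> of
  positive weight, hence no north edge strictly between \<open>u\<close> and it closes a balanced arc.\<close>

locale cyclic_grading =
  fixes n :: nat and north :: "nat \<Rightarrow> bool" and w :: "nat \<Rightarrow> nat"
  assumes n_pos: "0 < n"
    and north_shadowed: "\<And>v. v < n \<Longrightarrow> north v \<Longrightarrow> 0 < w v \<Longrightarrow> \<exists>u<n. \<not> north u \<and> 0 < w u \<and>
        (\<forall>x \<in> cyc_arc n u v - {v}. north x \<longrightarrow> \<not> arc_balanced n north w u x)"
    and compatible: "arc_compatible n north w"
begin

abbreviation north_edges :: "nat set" where "north_edges \<equiv> {i. i < n \<and> north i}"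
abbreviation east_edges :: "nat set" where "east_edges \<equiv> {i. i < n \<and> \<not> north i}"

definition drift :: "nat \<Rightarrow> int" where
  "drift i = (if north i then -1 else int (w i))"

abbreviation charged :: "nat \<Rightarrow> bool" where
  "charged m \<equiv> 0 < max_suffix_sum n drift m"

lemma charged_period: "charged (m + n) \<longleftrightarrow> charged m"
  by (simp add: max_suffix_sum_period)

lemma charged_mod: "charged m \<longleftrightarrow> charged (m mod n)"
  by (rule periodic_eq_mod[of "\<lambda>m. charged m", OF charged_period])

lemma sum_drift:
  "finite A \<Longrightarrow> sum drift A = int (sum w (A \<inter> {i. \<not> north i})) - int (card (A \<inter> {i. north i}))"
  by (simp add: drift_def sum.If_cases Compl_eq)

lemma arc_balanced_iff_drift:
  "arc_balanced n north w s f \<longleftrightarrow> sum drift (cyc_arc n s f) = 0"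
proof -
  have "finite (cyc_arc n s f)" by (simp add: cyc_arc_def)
  then show ?thesis
    by (auto simp: arc_balanced_def sum_drift simp del: of_nat_sum)
qed

lemma card_north_east: "card north_edges + card east_edges = n"
proof -
  have "north_edges \<union> east_edges = {..<n}" by auto
  then show ?thesis by (subst card_Un_disjoint[symmetric]) auto
qed

context
  fixes u v :: nat
  assumes u: "u < n" "\<not> north u" "0 < w u" and v: "v < n"
    and no_earlier_balanced: "\<forall>x \<in> cyc_arc n u v - {v}. north x \<longrightarrow> \<not> arc_balanced n north w u x"
begin

lemma prefix_drift_pos: "0 < k \<Longrightarrow> k \<le> cdist n u v \<Longrightarrow> 0 < (\<Sum>i<k. drift ((u + i) mod n))"
proof (induction k)
  case (Suc k)
  show ?case
  proof (cases "k = 0")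
    case True
    then show ?thesis using u by (simp add: drift_def)
  next
    case False
    define x where "x = (u + k) mod n"
    have k: "k < cdist n u v" "cdist n u v < n"
      using Suc.prems cdist_less[OF u(1) v] by auto
    have pos: "0 < (\<Sum>i<k. drift ((u + i) mod n))"
      using Suc False k by simp
    have dist_x: "cdist n u x = k"
      unfolding x_def using k u(1) by (simp add: cdist_add_mod)
    have "0 < (\<Sum>i<k. drift ((u + i) mod n)) + drift x"
    proof (cases "north x")
      case True
      have "x < n" unfolding x_def using n_pos by simp
      then have "x \<in> cyc_arc n u v - {v}"
        using dist_x k u(1) v by (auto simp: mem_cyc_arc_iff)
      then have "sum drift (cyc_arc n u x) \<noteq> 0"
        using no_earlier_balanced True by (simp add: arc_balanced_iff_drift)
      moreover have "sum drift (cyc_arc n u x) = (\<Sum>i<k. drift ((u + i) mod n)) + drift x"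
        using \<open>x < n\<close> u(1) dist_x by (simp add: sum_cyc_arc lessThan_Suc_atMost[symmetric] x_def)
      ultimately show ?thesis using pos True by (simp add: drift_def)
    qed (use pos in \<open>simp add: drift_def\<close>)
    then show ?thesis by (simp add: x_def)
  qed
qed simp

lemma charged_on_arc: "y \<in> cyc_arc n u v \<Longrightarrow> y \<noteq> u \<Longrightarrow> charged y"
proof -
  assume y: "y \<in> cyc_arc n u v" "y \<noteq> u"
  define d where "d = cdist n u y"
  have "y < n" "d \<le> cdist n u v" using y u(1) v by (auto simp: mem_cyc_arc_iff d_def)
  moreover have "d \<noteq> 0" using cdist_eq_iff[OF u(1) \<open>y < n\<close> u(1)] y(2) by (auto simp: d_def)
  ultimately have "0 < max_suffix_sum n drift (u + d)"
    using prefix_drift_pos[of d] sum_le_max_suffix_sum[of d n drift u] cdist_less[OF u(1) v]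
    by fastforce
  moreover have "(u + d) mod n = y"
    unfolding d_def using add_cdist_mod[OF u(1) \<open>y < n\<close>] .
  ultimately show "charged y" using charged_mod by metis
qed

end

lemma exists_charged_balanced_arc:
  assumes v: "v < n" "north v" "0 < w v"
  shows "\<exists>e<n. \<not> north e \<and> arc_balanced n (\<lambda>i. \<not> north i) w e v \<and> (\<forall>y \<in> cyc_arc n e v. charged y)"
proof -
  obtain u where u: "u < n" "\<not> north u" "0 < w u"
    and no_earlier: "\<forall>x \<in> cyc_arc n u v - {v}. north x \<longrightarrow> \<not> arc_balanced n north w u x"
    using north_shadowed[OF v] by blast
  obtain e where e: "e \<in> cyc_arc n u v" "\<not> north e" "e \<noteq> u" "arc_balanced n (\<lambda>i. \<not> north i) w e v"
    using compatible u v no_earlier unfolding arc_compatible_def by blast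
  have "cyc_arc n e v \<subseteq> cyc_arc n u v - {u}"
    using cyc_arc_subarc[OF u(1) v(1) e(1,3)] .
  then have "\<forall>y \<in> cyc_arc n e v. charged y"
    using charged_on_arc[OF u v(1) no_earlier] by blast
  moreover have "e < n" using e(1) cyc_arc_subset[OF v(1)] by blast
  ultimately show ?thesis using e by blast
qed

lemma north_weight_le_charged_east:
  "sum w north_edges \<le> card {i. i < n \<and> \<not> north i \<and> charged i}"
proof -
  define b where "b i = (if north i then int (w i) else if charged i then -1 else 0)" for i
  have sum_b: "sum b A = int (sum w (A \<inter> {i. north i})) - int (card (A \<inter> {i. \<not> north i \<and> charged i}))"
    if "finite A" for A
    using that by (simp add: b_def sum.If_cases Compl_eq Int_assoc Int_def)
  have "\<not> 0 < sum b {..<n}"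
  proof
    assume "0 < sum b {..<n}"
    then obtain v where v: "v < n" and pos: "\<And>s. s < n \<Longrightarrow> 0 < sum b (cyc_arc n s v)"
      using exists_positive_arcs_end[OF n_pos] by blast
    have "north v" "0 < w v"
      using pos[OF v] by (auto simp: b_def split: if_splits)
    then obtain e where e: "e < n" "arc_balanced n (\<lambda>i. \<not> north i) w e v"
      "\<forall>y \<in> cyc_arc n e v. charged y"
      using exists_charged_balanced_arc[OF v] by blast
    have "cyc_arc n e v \<inter> {i. \<not> north i \<and> charged i} = cyc_arc n e v \<inter> {i. \<not> north i}"
      using e(3) by blast
    then have "sum b (cyc_arc n e v) = 0"
      using e(2) sum_b[of "cyc_arc n e v"] by (simp add: arc_balanced_def cyc_arc_def)
    then show False using pos[OF e(1)] by simp
  qed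
  moreover have "{..<n} \<inter> {i. north i} = north_edges"
    "{..<n} \<inter> {i. \<not> north i \<and> charged i} = {i. i < n \<and> \<not> north i \<and> charged i}"
    by auto
  ultimately show ?thesis using sum_b[of "{..<n}"] by (simp flip: of_nat_sum)
qed

lemma charged_north_le_east_weight:
  "card {i. i < n \<and> north i \<and> charged i} \<le> sum w east_edges"
proof -
  define r where "r i = (if north i then if charged i then -1 else 0 else int (w i))" for i
  have "max 0 (max_suffix_sum n drift m + drift m) = max_suffix_sum n drift m + r m" for m
    using max_suffix_sum_nonneg[OF n_pos, of drift m] by (auto simp: r_def drift_def)
  then have "0 \<le> sum r {..<n}"
    using sum_max_suffix_sum_le[OF n_pos, of drift] by (simp add: sum.distrib)
  moreover have "sum r {..<n} = int (sum w east_edges) - int (card {i. i < n \<and> north i \<and> charged i})"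
  proof -
    have "{..<n} \<inter> {i. north i \<and> charged i} = {i. i < n \<and> north i \<and> charged i}"
      "{..<n} \<inter> {i. \<not> north i} = east_edges"
      by auto
    then show ?thesis by (simp add: r_def sum.If_cases Compl_eq Int_assoc Int_def)
  qed
  ultimately show ?thesis by (simp flip: of_nat_sum)
qed

lemma switch_off_at_north:
  assumes "sum drift {..<n} \<le> 0" "charged m" "\<not> charged (Suc m)" "m < n"
  shows "north m"
  using max_suffix_sum_Suc_pos[OF n_pos assms(1,2)] assms(3,4) by (cases "north m") (auto simp: drift_def)

lemma switch_on_at_east:
  assumes "\<not> charged m" "charged (Suc m)" "m < n"
  shows "\<not> north m"
  using max_suffix_sum_Suc_le[OF n_pos, of drift m] assms by (auto simp: drift_def)

lemma sum_drift_lessThan: "sum drift {..<n} = int (sum w east_edges) - int (card north_edges)"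
proof -
  have "{..<n} \<inter> {i. \<not> north i} = east_edges" "{..<n} \<inter> {i. north i} = north_edges"
    by auto
  then show ?thesis by (simp add: sum_drift del: of_nat_sum)
qed

lemma sum_charged_increments:
  fixes h :: "nat \<Rightarrow> int"
  assumes h_step: "\<And>m. m < n \<Longrightarrow> h (Suc m) = h m + (if north m then int (card east_edges) else - int (card north_edges))"
  shows "(\<Sum>m<n. of_bool (charged m) * (h (Suc m) - h m))
    = int (card east_edges) * int (card {i. i < n \<and> north i \<and> charged i})
      - int (card north_edges) * int (card {i. i < n \<and> \<not> north i \<and> charged i})"
proof -
  have "(\<Sum>m<n. of_bool (charged m) * (h (Suc m) - h m))
      = (\<Sum>m<n. of_bool (north m \<and> charged m) * int (card east_edges)
          - of_bool (\<not> north m \<and> charged m) * int (card north_edges))"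
    using h_step by (intro sum.cong) auto
  then show ?thesis
    by (simp add: sum_subtractf Int_def mult.commute)
qed

text \<open>Since charge can only be lost at north edges and
  gained at east edges, summation by parts against the bounds on \<open>h\<close> weighs the charged
  north edges against the charged east edges.\<close>

lemma charged_transfer:
  fixes h :: "nat \<Rightarrow> int"
  assumes h_period: "h n = h 0"
    and h_step: "\<And>m. m < n \<Longrightarrow> h (Suc m) = h m + (if north m then int (card east_edges) else - int (card north_edges))"
    and h_bounds: "\<And>m. m < n \<Longrightarrow> - int n < h m \<and> h m \<le> 0"
    and east_light: "sum w east_edges \<le> card north_edges" and "charged i"
  shows "card north_edges * card {i. i < n \<and> \<not> north i \<and> charged i}
       < card east_edges * card {i. i < n \<and> north i \<and> charged i}"
proof -
  let ?\<beta> = "int (card north_edges)"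
  have total: "sum drift {..<n} \<le> 0"
    using east_light by (simp add: sum_drift_lessThan del: of_nat_sum)
  obtain j where "\<not> charged j"
    using max_suffix_sum_vanishes[OF n_pos total] by (metis not_less)
  then obtain m0 where m0: "m0 < n" "charged m0" "\<not> charged (Suc m0)"
    using exists_switch_off[of n "\<lambda>m. charged m", OF n_pos charged_period \<open>charged i\<close>] by blast
  define t where "t m = (of_bool (charged m) - of_bool (charged (Suc m))) * (h (Suc m) + ?\<beta>)" for m
  have h_north: "0 < h (Suc m) + ?\<beta>" if "m < n" "north m" for m
    using h_step[OF that(1)] h_bounds[OF that(1)] that(2) card_north_east by simp
  have t_nonneg: "0 \<le> t m" if "m < n" for m
  proof -
    consider "charged m = charged (Suc m)" | "charged m" "\<not> charged (Suc m)" | "\<not> charged m" "charged (Suc m)"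
      by blast
    then show ?thesis
    proof cases
      case 2
      then show ?thesis using switch_off_at_north[OF total 2 that] h_north[OF that] by (simp add: t_def)
    next
      case 3
      then show ?thesis using switch_on_at_east[OF 3 that] h_step[OF that] h_bounds[OF that]
        by (simp add: t_def)
    qed (simp add: t_def)
  qed
  have "0 < t m0"
    using switch_off_at_north[OF total m0(2,3,1)] h_north[OF m0(1)] m0 by (simp add: t_def)
  then have "0 < (\<Sum>m<n. t m)"
    using t_nonneg m0(1) by (intro sum_pos2[of _ m0]) auto
  also have "(\<Sum>m<n. t m) = (\<Sum>m<n. of_bool (charged m) * (h (Suc m) - h m))"
    unfolding t_def using charged_period[of 0] h_period
    by (intro sum_of_bool_increments_telescope[symmetric]) simp_all
  also have "\<dots> = int (card east_edges) * int (card {i. i < n \<and> north i \<and> charged i})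
      - ?\<beta> * int (card {i. i < n \<and> \<not> north i \<and> charged i})"
    by (rule sum_charged_increments[OF h_step])
  finally show ?thesis by (simp flip: of_nat_mult)
qed

lemma weight_ratio_east_light:
  fixes h :: "nat \<Rightarrow> int"
  assumes h_period: "h n = h 0"
    and h_step: "\<And>m. m < n \<Longrightarrow> h (Suc m) = h m + (if north m then int (card east_edges) else - int (card north_edges))"
    and h_bounds: "\<And>m. m < n \<Longrightarrow> - int n < h m \<and> h m \<le> 0"
    and east_light: "sum w east_edges \<le> card north_edges" and north_pos: "0 < sum w north_edges"
  shows "sum w north_edges * card north_edges < sum w east_edges * card east_edges"
proof -
  define cN cE where "cN = card {i. i < n \<and> north i \<and> charged i}"
    and "cE = card {i. i < n \<and> \<not> north i \<and> charged i}"
  have north_cE: "sum w north_edges \<le> cE"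
    unfolding cE_def by (rule north_weight_le_charged_east)
  then have "{i. i < n \<and> \<not> north i \<and> charged i} \<noteq> {}"
    using north_pos unfolding cE_def by (intro notI) simp
  then obtain i where "charged i"
    by blast
  have "sum w north_edges * card north_edges \<le> card north_edges * cE"
    using north_cE by (simp add: mult.commute)
  also have "\<dots> < card east_edges * cN"
    unfolding cE_def cN_def by (rule charged_transfer[OF h_period h_step h_bounds east_light \<open>charged i\<close>])
  also have "\<dots> \<le> sum w east_edges * card east_edges"
    using charged_north_le_east_weight unfolding cN_def by (simp add: mult.commute)
  finally show ?thesis .
qed

theorem north_east_weight_ratio:
  fixes h :: "nat \<Rightarrow> int"
  assumes h_period: "h n = h 0"
    and h_step: "\<And>m. m < n \<Longrightarrow> h (Suc m) = h m + (if north m then int (card east_edges) else - int (card north_edges))"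
    and h_bounds: "\<And>m. m < n \<Longrightarrow> - int n < h m \<and> h m \<le> 0"
    and nonzero: "(sum w north_edges, sum w east_edges) \<noteq> (0, 0)"
  shows "sum w north_edges * card north_edges < sum w east_edges * card east_edges"
proof (cases "sum w east_edges \<le> card north_edges \<and> 0 < sum w north_edges")
  case True
  then show ?thesis using weight_ratio_east_light[OF h_period h_step h_bounds] by blast
next
  case False
  then have "0 < sum w east_edges"
    using nonzero by (auto simp del: sum_eq_0_iff)
  then have "east_edges \<noteq> {}" by (intro notI) simp
  then have east_pos: "0 < card east_edges" by (simp add: card_gt_0_iff)
  consider "sum w north_edges = 0" | "card north_edges < sum w east_edges"
    using False by linarith
  then show ?thesis
  proof cases
    case 1
    then show ?thesis using east_pos \<open>0 < sum w east_edges\<close> by simp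
  next
    case 2
    have "sum w north_edges \<le> card east_edges"
      using north_weight_le_charged_east by (rule order_trans) (rule card_mono, auto)
    then have "sum w north_edges * card north_edges \<le> card east_edges * card north_edges"
      by simp
    also have "\<dots> < sum w east_edges * card east_edges"
      using 2 east_pos by simp
    finally show ?thesis .
  qed
qed

end

lemma cyclic_grading_mirror:
  assumes "0 < n" "arc_compatible n north w"
    and east_shadowed: "\<And>v. v < n \<Longrightarrow> \<not> north v \<Longrightarrow> 0 < w v \<Longrightarrow> \<exists>e<n. north e \<and> 0 < w e \<and>
        (\<forall>x \<in> cyc_arc n v e - {v}. \<not> north x \<longrightarrow> \<not> arc_balanced n (\<lambda>i. \<not> north i) w x e)"
  shows "cyclic_grading n (\<lambda>i. \<not> north (mirror n i)) (\<lambda>i. w (mirror n i))"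
proof
  show "0 < n" "arc_compatible n (\<lambda>i. \<not> north (mirror n i)) (\<lambda>i. w (mirror n i))"
    using assms(1) arc_compatible_mirror[OF assms(2)] by simp_all
  fix v' assume v': "v' < n" "\<not> north (mirror n v')" "0 < w (mirror n v')"
  define v where "v = mirror n v'"
  have v: "v < n" "v' = mirror n v"
    using v'(1) by (simp_all add: v_def mirror_less)
  obtain e where e: "e < n" "north e" "0 < w e"
    and no_later: "\<forall>x \<in> cyc_arc n v e - {v}. \<not> north x \<longrightarrow> \<not> arc_balanced n (\<lambda>i. \<not> north i) w x e"
    using east_shadowed[OF v(1)] v' unfolding v_def by blast
  have "\<not> arc_balanced n (\<lambda>i. \<not> north (mirror n i)) (\<lambda>i. w (mirror n i)) (mirror n e) x'"
    if "x' \<in> cyc_arc n (mirror n e) v' - {v'}" "\<not> north (mirror n x')" for x'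
  proof -
    have x': "x' < n" "mirror n x' \<in> cyc_arc n v e - {v}"
      using that v e(1) by (auto simp: mem_cyc_arc_mirror)
    then show ?thesis
      using no_later that(2) arc_balanced_mirror[OF mirror_less[OF x'(1)] e(1), of "\<lambda>i. \<not> north i" w]
      by simp
  qed
  then show "\<exists>u<n. \<not> \<not> north (mirror n u) \<and> 0 < w (mirror n u) \<and>
      (\<forall>x \<in> cyc_arc n u v' - {v'}. \<not> north (mirror n x) \<longrightarrow>
         \<not> arc_balanced n (\<lambda>i. \<not> north (mirror n i)) (\<lambda>i. w (mirror n i)) u x)"
    using e mirror_less[OF e(1)] by (intro exI[of _ "mirror n e"]) simp
qed

section \<open>The lattice path\<close>

lemma dpos_Suc:
  "dpos d1 d2 (Suc i) = (if isN d1 d2 i then (fst (dpos d1 d2 i), Suc (snd (dpos d1 d2 i)))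
     else (Suc (fst (dpos d1 d2 i)), snd (dpos d1 d2 i)))"
  by (simp add: isN_def split: prod.splits)

declare dpos.simps(2) [simp del]

lemma dpos_count:
  "dpos d1 d2 i = (\<Sum>j<i. of_bool (\<not> isN d1 d2 j), \<Sum>j<i. of_bool (isN d1 d2 j))"
  by (induction i) (simp_all add: dpos_Suc)

lemma dpos_invariant:
  assumes "i \<le> d1 + d2" "dpos d1 d2 i = (x, y)"
  shows "x \<le> d1 \<and> y \<le> d2 \<and> x + y = i \<and> y * d1 \<le> x * d2"
  using assms
proof (induction i arbitrary: x y)
  case (Suc i)
  obtain x' y' where xy': "dpos d1 d2 i = (x', y')" by fastforce
  then have IH: "x' \<le> d1" "y' \<le> d2" "x' + y' = i" "y' * d1 \<le> x' * d2"
    using Suc by auto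
  show ?case
  proof (cases "isN d1 d2 i")
    case True
    then show ?thesis using IH xy' Suc.prems(2) by (auto simp: dpos_Suc isN_def)
  next
    case False
    then have not_north: "\<not> (y' < d2 \<and> (y' + 1) * d1 \<le> x' * d2)"
      using xy' by (simp add: isN_def)
    have "x' < d1"
    proof (rule ccontr)
      assume "\<not> x' < d1"
      then have "x' = d1" "y' < d2" using IH Suc.prems(1) by auto
      then have "(y' + 1) * d1 \<le> x' * d2"
        using mult_le_mono1[of "y' + 1" d2 d1] by (simp add: mult.commute)
      then show False using not_north \<open>y' < d2\<close> by simp
    qed
    moreover have "y' * d1 \<le> (x' + 1) * d2" using IH by (simp add: add_mult_distrib)
    ultimately show ?thesis using IH False xy' Suc.prems(2) by (auto simp: dpos_Suc)
  qed
qed simp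

lemma dpos_end: "dpos d1 d2 (d1 + d2) = (d1, d2)"
  using dpos_invariant[of "d1 + d2" d1 d2] by (cases "dpos d1 d2 (d1 + d2)") auto

lemma card_edgesN: "card (edgesN d1 d2) = d2"
proof -
  have "edgesN d1 d2 = {..<d1 + d2} \<inter> {j. isN d1 d2 j}"
    by (auto simp: edgesN_def)
  then show ?thesis
    using dpos_count[of d1 d2 "d1 + d2"] dpos_end[of d1 d2] by simp
qed

lemma card_edgesE: "card (edgesE d1 d2) = d1"
proof -
  have "edgesE d1 d2 = {..<d1 + d2} \<inter> {j. \<not> isN d1 d2 j}"
    by (auto simp: edgesE_def)
  then show ?thesis
    using dpos_count[of d1 d2 "d1 + d2"] dpos_end[of d1 d2] by simp
qed

definition path_height :: "nat \<Rightarrow> nat \<Rightarrow> nat \<Rightarrow> int" where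
  "path_height d1 d2 i = int (snd (dpos d1 d2 i)) * int d1 - int (fst (dpos d1 d2 i)) * int d2"

lemma path_height_0 [simp]: "path_height d1 d2 0 = 0"
  by (simp add: path_height_def)

lemma path_height_end [simp]: "path_height d1 d2 (d1 + d2) = 0"
  by (simp add: path_height_def dpos_end)

lemma path_height_Suc:
  "path_height d1 d2 (Suc i) = path_height d1 d2 i + (if isN d1 d2 i then int d1 else - int d2)"
  by (simp add: path_height_def dpos_Suc algebra_simps)

lemma path_height_nonpos: "i \<le> d1 + d2 \<Longrightarrow> path_height d1 d2 i \<le> 0"
  using dpos_invariant[of i d1 d2] unfolding path_height_def
  by (cases "dpos d1 d2 i") (simp flip: of_nat_mult)

lemma path_height_east: "i < d1 + d2 \<Longrightarrow> \<not> isN d1 d2 i \<Longrightarrow> - int d1 < path_height d1 d2 i"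
proof -
  assume i: "i < d1 + d2" "\<not> isN d1 d2 i"
  obtain x y where xy: "dpos d1 d2 i = (x, y)" by fastforce
  then have inv: "x \<le> d1" "y \<le> d2" "x + y = i" using dpos_invariant[of i d1 d2] i by auto
  have not_north: "\<not> (y < d2 \<and> (y + 1) * d1 \<le> x * d2)" using i xy by (simp add: isN_def)
  show ?thesis
  proof (cases "y < d2")
    case True
    then have "x * d2 < (y + 1) * d1"
      using not_north by simp
    then have "int x * int d2 < (int y + 1) * int d1"
      by (metis of_nat_less_iff of_nat_mult of_nat_Suc Suc_eq_plus1 add.commute)
    then show ?thesis using xy by (simp add: path_height_def algebra_simps)
  next
    case False
    then have "y = d2" "x < d1" using inv i by auto
    then have "int x * int d2 \<le> int d1 * int d2" by (simp add: mult_right_mono)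
    then show ?thesis using xy \<open>y = d2\<close> \<open>x < d1\<close> by (simp add: path_height_def algebra_simps)
  qed
qed

lemma path_height_lower: "0 < d1 + d2 \<Longrightarrow> i \<le> d1 + d2 \<Longrightarrow> - int (d1 + d2) < path_height d1 d2 i"
proof (induction i)
  case (Suc i)
  then show ?case
    using path_height_Suc[of d1 d2 i] path_height_east[of i d1 d2] by (cases "isN d1 d2 i") auto
qed (simp, linarith)

section \<open>Shadows and the classes CG0plus and CG0minus\<close>

lemma arc_Int_edges:
  assumes "f < d1 + d2"
  shows "arc d1 d2 s f \<inter> edgesN d1 d2 = cyc_arc (d1 + d2) s f \<inter> {i. isN d1 d2 i}"
    and "arc d1 d2 s f \<inter> edgesE d1 d2 = cyc_arc (d1 + d2) s f \<inter> {i. \<not> isN d1 d2 i}"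
  using cyc_arc_subset[OF assms, of s] by (auto simp: arc_eq_cyc_arc edgesN_def edgesE_def)

lemma compatible_arc_compatible:
  assumes "compatible d1 d2 w"
  shows "arc_compatible (d1 + d2) (isN d1 d2) w"
  unfolding arc_compatible_def
proof (intro allI impI)
  fix u v assume uv: "u < d1 + d2" "v < d1 + d2" "\<not> isN d1 d2 u" "isN d1 d2 v" "0 < w u" "0 < w v"
  then have "u \<in> edgesE d1 d2" "v \<in> edgesN d1 d2" "0 < w u * w v"
    by (simp_all add: edgesE_def edgesN_def)
  then obtain e where e: "e \<in> arc d1 d2 u v"
    and alt: "(e \<in> edgesN d1 d2 - {v} \<and>
           card (arc d1 d2 u e \<inter> edgesN d1 d2) = sum w (arc d1 d2 u e \<inter> edgesE d1 d2))
      \<or> (e \<in> edgesE d1 d2 - {u} \<and>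
           card (arc d1 d2 e v \<inter> edgesE d1 d2) = sum w (arc d1 d2 e v \<inter> edgesN d1 d2))"
    using assms unfolding compatible_def by blast
  have "e < d1 + d2" using e cyc_arc_subset[OF uv(2)] by (auto simp: arc_eq_cyc_arc)
  then have "e \<in> edgesN d1 d2 \<longleftrightarrow> isN d1 d2 e" "e \<in> edgesE d1 d2 \<longleftrightarrow> \<not> isN d1 d2 e"
    by (simp_all add: edgesN_def edgesE_def)
  with e alt show "\<exists>e \<in> cyc_arc (d1 + d2) u v.
      (isN d1 d2 e \<and> e \<noteq> v \<and> arc_balanced (d1 + d2) (isN d1 d2) w u e)
    \<or> (\<not> isN d1 d2 e \<and> e \<noteq> u \<and> arc_balanced (d1 + d2) (\<lambda>i. \<not> isN d1 d2 i) w e v)"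
    using arc_Int_edges[OF \<open>e < d1 + d2\<close>, of u] arc_Int_edges[OF uv(2), of e]
    by (auto simp: arc_balanced_def arc_eq_cyc_arc)
qed

lemma shadow_weight_pos: "v \<in> shadow d1 d2 w u \<Longrightarrow> 0 < w u"
  by (cases "w u = 0") (auto simp: shadow_def)

lemma in_some_shadow:
  assumes "sum w (A - shadowSet d1 d2 w B) = 0" "finite A" "v \<in> A" "0 < w v"
  shows "\<exists>u \<in> B. v \<in> shadow d1 d2 w u"
proof (rule ccontr)
  assume "\<not> ?thesis"
  then have "v \<in> A - shadowSet d1 d2 w B" using assms(3) by (auto simp: shadowSet_def)
  then show False using assms by (simp add: sum_eq_0_iff)
qed

lemma shadow_east_edge_first_balanced:
  assumes u: "u \<in> edgesE d1 d2" and v: "v \<in> shadow d1 d2 w u"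
    and x: "x \<in> arc d1 d2 u v - {v}" "x \<in> edgesN d1 d2"
  shows "card (arc d1 d2 u x \<inter> edgesN d1 d2) \<noteq> sum w (arc d1 d2 u x \<inter> edgesE d1 d2)"
proof
  let ?n = "d1 + d2"
  define P where "P = (\<lambda>v. v \<in> edgesN d1 d2 \<and>
    card (arc d1 d2 u v \<inter> edgesN d1 d2) = sum w (arc d1 d2 u v \<inter> edgesE d1 d2))"
  define m where "m = arg_min (\<lambda>v. card (arc d1 d2 u v)) P"
  assume "card (arc d1 d2 u x \<inter> edgesN d1 d2) = sum w (arc d1 d2 u x \<inter> edgesE d1 d2)"
  then have "P x" using x(2) by (simp add: P_def)
  then have m: "P m" "card (arc d1 d2 u m) \<le> card (arc d1 d2 u x)"
    using arg_min_nat_lemma[of P x "\<lambda>v. card (arc d1 d2 u v)"] by (auto simp: m_def)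
  have "shadow d1 d2 w u = arc d1 d2 u m \<inter> edgesN d1 d2"
    using u \<open>P x\<close> shadow_weight_pos[OF v] unfolding shadow_def Let_def P_def m_def by auto
  then have "v \<in> arc d1 d2 u m" using v by simp
  have lt: "u < ?n" "m < ?n" "x < ?n" "v < ?n"
    using u m(1) x(2) \<open>v \<in> arc d1 d2 u m\<close> cyc_arc_subset[of m ?n u]
    by (auto simp: edgesE_def edgesN_def P_def arc_eq_cyc_arc)
  have "cdist ?n u v \<le> cdist ?n u m"
    using \<open>v \<in> arc d1 d2 u m\<close> lt by (simp add: arc_eq_cyc_arc mem_cyc_arc_iff)
  also have "\<dots> \<le> cdist ?n u x"
    using m(2) lt by (simp add: arc_eq_cyc_arc card_cyc_arc)
  also have "\<dots> < cdist ?n u v"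
    using x(1) lt cdist_eq_iff[of u ?n x v] by (auto simp: arc_eq_cyc_arc mem_cyc_arc_iff)
  finally show False by simp
qed

lemma shadow_north_edge_last_balanced:
  assumes e: "e \<in> edgesN d1 d2" and v: "v \<in> shadow d1 d2 w e"
    and x: "x \<in> arc d1 d2 v e - {v}" "x \<in> edgesE d1 d2"
  shows "card (arc d1 d2 x e \<inter> edgesE d1 d2) \<noteq> sum w (arc d1 d2 x e \<inter> edgesN d1 d2)"
proof
  let ?n = "d1 + d2"
  define P where "P = (\<lambda>u. u \<in> edgesE d1 d2 \<and>
    card (arc d1 d2 u e \<inter> edgesE d1 d2) = sum w (arc d1 d2 u e \<inter> edgesN d1 d2))"
  define m where "m = arg_min (\<lambda>u. card (arc d1 d2 u e)) P"
  assume "card (arc d1 d2 x e \<inter> edgesE d1 d2) = sum w (arc d1 d2 x e \<inter> edgesN d1 d2)"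
  then have "P x" using x(2) by (simp add: P_def)
  then have m: "P m" "card (arc d1 d2 m e) \<le> card (arc d1 d2 x e)"
    using arg_min_nat_lemma[of P x "\<lambda>u. card (arc d1 d2 u e)"] by (auto simp: m_def)
  have "e \<notin> edgesE d1 d2" using e by (simp add: edgesN_def edgesE_def)
  then have "shadow d1 d2 w e = arc d1 d2 m e \<inter> edgesE d1 d2"
    using \<open>P x\<close> shadow_weight_pos[OF v] unfolding shadow_def Let_def P_def m_def by auto
  then have "v \<in> arc d1 d2 m e" using v by simp
  have lt: "e < ?n" "m < ?n" "x < ?n" "v < ?n"
    using e m(1) x(2) \<open>v \<in> arc d1 d2 m e\<close> cyc_arc_subset[of e ?n m]
    by (auto simp: edgesE_def edgesN_def P_def arc_eq_cyc_arc)
  have "cdist ?n v e \<le> cdist ?n m e"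
    using \<open>v \<in> arc d1 d2 m e\<close> lt by (simp add: arc_eq_cyc_arc mem_cyc_arc_iff_end)
  also have "\<dots> \<le> cdist ?n x e"
    using m(2) lt by (simp add: arc_eq_cyc_arc card_cyc_arc)
  also have "\<dots> < cdist ?n v e"
    using x(1) lt cdist_eq_iff_end[of e ?n x v] by (auto simp: arc_eq_cyc_arc mem_cyc_arc_iff_end)
  finally show False by simp
qed

lemma path_length_pos:
  assumes "(sum w (edgesN d1 d2), sum w (edgesE d1 d2)) \<noteq> (0, 0)"
  shows "0 < d1 + d2"
proof (rule ccontr)
  assume "\<not> 0 < d1 + d2"
  then have "edgesN d1 d2 = {}" "edgesE d1 d2 = {}"
    by (auto simp: edgesN_def edgesE_def)
  with assms show False by simp
qed

lemma CG0plus_cyclic_grading: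
  assumes w: "w \<in> CG0plus d1 d2 p q" and n: "0 < d1 + d2"
  shows "cyclic_grading (d1 + d2) (isN d1 d2) w"
proof
  let ?n = "d1 + d2"
  show "0 < ?n" by (fact n)
  show "arc_compatible ?n (isN d1 d2) w"
    using w by (intro compatible_arc_compatible) (simp add: CG0plus_def)
  fix v assume v: "v < ?n" "isN d1 d2 v" "0 < w v"
  then obtain u where u: "u \<in> edgesE d1 d2" "v \<in> shadow d1 d2 w u"
    using w in_some_shadow[of w "edgesN d1 d2" d1 d2 "edgesE d1 d2" v]
    by (auto simp: CG0plus_def edgesN_def)
  have "\<not> arc_balanced ?n (isN d1 d2) w u x" if x: "x \<in> cyc_arc ?n u v - {v}" "isN d1 d2 x" for x
  proof -
    have "x < ?n" using x(1) cyc_arc_subset[OF v(1)] by blast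
    then show ?thesis
      using shadow_east_edge_first_balanced[OF u, of x] x arc_Int_edges[OF \<open>x < ?n\<close>, of u]
      by (simp add: arc_balanced_def arc_eq_cyc_arc edgesN_def)
  qed
  then show "\<exists>u<?n. \<not> isN d1 d2 u \<and> 0 < w u \<and>
      (\<forall>x \<in> cyc_arc ?n u v - {v}. isN d1 d2 x \<longrightarrow> \<not> arc_balanced ?n (isN d1 d2) w u x)"
    using u shadow_weight_pos[OF u(2)] by (auto simp: edgesE_def)
qed

lemma CG0minus_cyclic_grading:
  assumes w: "w \<in> CG0minus d1 d2 p q" and n: "0 < d1 + d2"
  shows "cyclic_grading (d1 + d2) (\<lambda>i. \<not> isN d1 d2 (mirror (d1 + d2) i)) (\<lambda>i. w (mirror (d1 + d2) i))"
proof (rule cyclic_grading_mirror[OF n])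
  let ?n = "d1 + d2"
  show "arc_compatible ?n (isN d1 d2) w"
    using w by (intro compatible_arc_compatible) (simp add: CG0minus_def)
  fix v assume v: "v < ?n" "\<not> isN d1 d2 v" "0 < w v"
  then obtain e where e: "e \<in> edgesN d1 d2" "v \<in> shadow d1 d2 w e"
    using w in_some_shadow[of w "edgesE d1 d2" d1 d2 "edgesN d1 d2" v]
    by (auto simp: CG0minus_def edgesE_def)
  have "e < ?n" using e(1) by (simp add: edgesN_def)
  have "\<not> arc_balanced ?n (\<lambda>i. \<not> isN d1 d2 i) w x e" if x: "x \<in> cyc_arc ?n v e - {v}" "\<not> isN d1 d2 x" for x
  proof -
    have "x < ?n" using x(1) cyc_arc_subset[OF \<open>e < ?n\<close>] by blast
    then show ?thesis
      using shadow_north_edge_last_balanced[OF e, of x] x arc_Int_edges[OF \<open>e < ?n\<close>, of x]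
      by (simp add: arc_balanced_def arc_eq_cyc_arc edgesE_def)
  qed
  then show "\<exists>e<?n. isN d1 d2 e \<and> 0 < w e \<and>
      (\<forall>x \<in> cyc_arc ?n v e - {v}. \<not> isN d1 d2 x \<longrightarrow> \<not> arc_balanced ?n (\<lambda>i. \<not> isN d1 d2 i) w x e)"
    using e \<open>e < ?n\<close> shadow_weight_pos[OF e(2)] by (auto simp: edgesN_def)
qed

lemma CG0plus_weight_ratio:
  assumes w: "w \<in> CG0plus d1 d2 p q" and pq: "(p, q) \<noteq> (0, 0)"
  shows "p * d2 < q * d1"
proof -
  have sums: "sum w (edgesN d1 d2) = p" "sum w (edgesE d1 d2) = q"
    using w by (simp_all add: CG0plus_def)
  then have n: "0 < d1 + d2" using pq path_length_pos by metis
  have edges: "{i. i < d1 + d2 \<and> isN d1 d2 i} = edgesN d1 d2" "{i. i < d1 + d2 \<and> \<not> isN d1 d2 i} = edgesE d1 d2"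
    by (simp_all add: edgesN_def edgesE_def)
  show ?thesis
    using cyclic_grading.north_east_weight_ratio[OF CG0plus_cyclic_grading[OF w n], of "path_height d1 d2"]
      path_height_Suc path_height_lower[OF n] path_height_nonpos pq
    by (simp add: edges sums card_edgesN card_edgesE)
qed

lemma CG0minus_weight_ratio:
  assumes w: "w \<in> CG0minus d1 d2 p q" and pq: "(p, q) \<noteq> (0, 0)"
  shows "q * d1 < p * d2"
proof -
  let ?n = "d1 + d2"
  have sums: "sum w (edgesN d1 d2) = p" "sum w (edgesE d1 d2) = q"
    using w by (simp_all add: CG0minus_def)
  then have n: "0 < ?n" using pq path_length_pos by metis
  have edges: "{i. i < ?n \<and> \<not> isN d1 d2 (mirror ?n i)} = mirror ?n ` edgesE d1 d2"
    "{i. i < ?n \<and> isN d1 d2 (mirror ?n i)} = mirror ?n ` edgesN d1 d2"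
    using mirror_image_Collect[of ?n "\<lambda>i. \<not> isN d1 d2 i"] mirror_image_Collect[of ?n "isN d1 d2"]
    by (simp_all add: edgesN_def edgesE_def)
  have sub: "edgesN d1 d2 \<subseteq> {..<?n}" "edgesE d1 d2 \<subseteq> {..<?n}"
    by (auto simp: edgesN_def edgesE_def)
  have mirrored:
    "card {i. i < ?n \<and> \<not> isN d1 d2 (mirror ?n i)} = d1" "card {i. i < ?n \<and> isN d1 d2 (mirror ?n i)} = d2"
    "sum (\<lambda>i. w (mirror ?n i)) {i. i < ?n \<and> \<not> isN d1 d2 (mirror ?n i)} = q"
    "sum (\<lambda>i. w (mirror ?n i)) {i. i < ?n \<and> isN d1 d2 (mirror ?n i)} = p"
    unfolding edges using sub sums
    by (simp_all add: card_mirror_image sum_mirror_image card_edgesN card_edgesE)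
  have step: "path_height d1 d2 (?n - Suc m) = path_height d1 d2 (?n - m)
      + (if \<not> isN d1 d2 (mirror ?n m) then int d2 else - int d1)" if "m < ?n" for m
    using that path_height_Suc[of d1 d2 "?n - Suc m"] by (simp add: mirror_def Suc_diff_Suc)
  have "sum (\<lambda>i. w (mirror ?n i)) {i. i < ?n \<and> \<not> isN d1 d2 (mirror ?n i)}
        * card {i. i < ?n \<and> \<not> isN d1 d2 (mirror ?n i)}
      < sum (\<lambda>i. w (mirror ?n i)) {i. i < ?n \<and> \<not> \<not> isN d1 d2 (mirror ?n i)}
        * card {i. i < ?n \<and> \<not> \<not> isN d1 d2 (mirror ?n i)}"
    by (rule cyclic_grading.north_east_weight_ratio[OF CG0minus_cyclic_grading[OF w n],
          of "\<lambda>i. path_height d1 d2 (?n - i)"])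
      (use step path_height_lower[OF n] path_height_nonpos pq in \<open>auto simp: mirrored add.commute\<close>)
  then show ?thesis by (simp add: mirrored)
qed

theorem lemma5p18:
  fixes d1 d2 p q :: nat
  assumes "(p, q) \<noteq> (0, 0)"
  shows "(q * d1 \<le> p * d2 \<longrightarrow> CG0plus d1 d2 p q = {})
       \<and> (p * d2 \<le> q * d1 \<longrightarrow> CG0minus d1 d2 p q = {})"
  using CG0plus_weight_ratio[OF _ assms] CG0minus_weight_ratio[OF _ assms]
  by (meson equals0I not_less)

end
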